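(* Let $H$ be a finite group of odd order. Then \[ \mathsf{GEN}(H)=\begin{cases} *0, & \text{if } |H|=1,\\ *2, & \text{if } |H|>1 \text{ and } d(H)\in\{1,2\},\\ *1, & \text{otherwise.}\end{cases} \]
   Context: For a finite group $G$, $\mathsf{GEN}(G)$ is the following impartial two-player game. A position is a set of elements selected so far; the starting position is $\emptyset$. From a position $P$ with $\langle P\rangle\neq G$, the player to move selects some $g\in G\setminus P$, producing the position $P\cup\{g\}$ (these are the options of $P$); a position $P$ with $\langle P\rangle = G$ has no options. The nim-number of a position is defined recursively by $\operatorname{nim}(P)=\operatorname{mex}\{\operatorname{nim}(Q): Q \text{ an option of } P\}$, where $\operatorname{mex}(A)$ is the least nonnegative integer not in $A$. We write $\mathsf{GEN}(G)=*n$ if $\operatorname{nim}(\emptyset)=n$. $d(G)$ denotes the minimum size of a generating set of $G$. *)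

theory Defs
  imports "HOL-Algebra.Generated_Groups"
begin

definition mex :: "nat set \<Rightarrow> nat" where
  "mex A = (LEAST n. n \<notin> A)"

text \<open>A position P with generate G P = carrier G has no options; otherwise the options are
  insert g P for g in carrier G - P.  Each move decreases card (carrier G - P) by one,
  so for finite G the fuel card (carrier G - P) suffices.\<close>
fun gen_nim_aux :: "('a, 'b) monoid_scheme \<Rightarrow> nat \<Rightarrow> 'a set \<Rightarrow> nat" where
  "gen_nim_aux G 0 P = 0"
| "gen_nim_aux G (Suc k) P =
     mex {gen_nim_aux G k (insert g P) | g. g \<in> carrier G - P \<and> generate G P \<noteq> carrier G}"

definition gen_nim :: "('a, 'b) monoid_scheme \<Rightarrow> 'a set \<Rightarrow> nat" where
  "gen_nim G P = gen_nim_aux G (card (carrier G - P)) P"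

definition GEN :: "('a, 'b) monoid_scheme \<Rightarrow> nat" where
  "GEN G = gen_nim G {}"

definition min_gen :: "('a, 'b) monoid_scheme \<Rightarrow> nat" where
  "min_gen G = (LEAST n. \<exists>S. S \<subseteq> carrier G \<and> finite S \<and> card S = n \<and> generate G S = carrier G)"

end

theory Submission
  imports Defs
begin

text \<open>In a group of odd order no set of even size is a subgroup, so from a non-generating
  position of even size some move leaves the generated subgroup unchanged. With this,
  induction on the number of unselected elements shows that the nim-number of a
  non-generating position \<open>P\<close> depends only on the parity of \<open>|P|\<close>: for odd \<open>|P|\<close> it is
  1 or 0 according as \<open>P\<close> can be completed to a generating set by one more element, for
  even \<open>|P|\<close> it is 2 or 1 according as two more elements suffice. The empty position is even,
  and two elements suffice for it exactly when \<open>d(H) \<le> 2\<close>.\<close>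

lemma mex_eqI:
  assumes "n \<notin> A" "\<And>m. m < n \<Longrightarrow> m \<in> A"
  shows "mex A = n"
  unfolding mex_def
  by (rule Least_equality) (use assms in \<open>auto intro: leI\<close>)

lemma mex_empty [simp]: "mex {} = 0"
  by (rule mex_eqI) auto

lemma gen_nim_unfold:
  assumes "finite (carrier G)"
  shows "gen_nim G P = (if generate G P = carrier G then 0
           else mex {gen_nim G (insert g P) | g. g \<in> carrier G - P})"
proof (cases "card (carrier G - P)")
  case 0
  then have "carrier G - P = {}" using assms by simp
  then have "{gen_nim G (insert g P) | g. g \<in> carrier G - P} = {}" by blast
  moreover have "gen_nim G P = 0" using 0 by (simp add: gen_nim_def)
  ultimately show ?thesis by (metis mex_empty)
next
  case (Suc k)
  have "gen_nim_aux G k (insert g P) = gen_nim G (insert g P)" if "g \<in> carrier G - P" for g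
  proof -
    have "carrier G - insert g P = (carrier G - P) - {g}" by blast
    then have "card (carrier G - insert g P) = k" using that Suc assms by simp
    then show ?thesis unfolding gen_nim_def by simp
  qed
  then have "{gen_nim_aux G k (insert g P) | g. g \<in> carrier G - P}
           = {gen_nim G (insert g P) | g. g \<in> carrier G - P}"
    by (metis (mono_tags, lifting))
  then show ?thesis using Suc unfolding gen_nim_def by simp
qed

context group
begin

lemma subset_generate: "P \<subseteq> generate G P"
  by (auto intro: generate.incl)

lemma generate_insert_absorb:
  assumes "P \<subseteq> carrier G" "g \<in> generate G P"
  shows "generate G (insert g P) = generate G P"
proof
  show "generate G (insert g P) \<subseteq> generate G P"
    using generate_subgroup_incl[OF _ generate_is_subgroup[OF assms(1)]] assms
      subset_generate[of P] by blast
qed (rule mono_generate, blast)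

lemma generate_empty_eq_carrier_iff: "generate G {} = carrier G \<longleftrightarrow> order G = 1"
proof
  assume "generate G {} = carrier G"
  then have "carrier G = {\<one>}" by (simp add: generate_empty)
  then show "order G = 1" by (simp add: order_def)
next
  assume "order G = 1"
  then obtain x where "carrier G = {x}" unfolding order_def by (rule card_1_singletonE)
  then show "generate G {} = carrier G" using one_closed by (auto simp: generate_empty)
qed

lemma subgroup_card_odd:
  assumes "odd (order G)" "subgroup H G"
  shows "odd (card H)"
proof -
  have "card H dvd order G" using lagrange[OF assms(2)] by (metis dvd_triv_right)
  then show ?thesis using assms(1) dvd_trans by blast
qed

lemma even_card_generates_new:
  assumes "odd (order G)" "P \<subseteq> carrier G" "even (card P)"
  obtains g where "g \<in> generate G P - P"
proof -
  have "generate G P \<noteq> P"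
    using subgroup_card_odd[OF assms(1) generate_is_subgroup[OF assms(2)]] assms(3)
    by (intro notI) simp
  then show ?thesis using that subset_generate[of P] by blast
qed

lemma min_gen_le_card:
  assumes "S \<subseteq> carrier G" "finite S" "generate G S = carrier G"
  shows "min_gen G \<le> card S"
  unfolding min_gen_def by (rule Least_le) (use assms in blast)

lemma min_gen_attained:
  assumes "finite (carrier G)"
  obtains S where "S \<subseteq> carrier G" "finite S" "card S = min_gen G" "generate G S = carrier G"
proof -
  have "generate G (carrier G) = carrier G"
    using generate_incl[of "carrier G"] subset_generate[of "carrier G"] by blast
  then have "\<exists>S. S \<subseteq> carrier G \<and> finite S \<and> card S = card (carrier G) \<and> generate G S = carrier G"
    using assms by blast
  then show ?thesis
    using that LeastI_ex[of "\<lambda>n. \<exists>S. S \<subseteq> carrier G \<and> finite S \<and> card S = n \<and> generate G S = carrier G"]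
    unfolding min_gen_def by blast
qed

lemma generated_by_two_iff_min_gen:
  assumes "finite (carrier G)" "order G \<noteq> 1"
  shows "(\<exists>g\<in>carrier G. \<exists>h\<in>carrier G. generate G {g, h} = carrier G) \<longleftrightarrow> min_gen G \<in> {1, 2}"
proof -
  obtain S where S: "S \<subseteq> carrier G" "finite S" "card S = min_gen G" "generate G S = carrier G"
    by (rule min_gen_attained[OF assms(1)])
  show ?thesis
  proof
    assume "\<exists>g\<in>carrier G. \<exists>h\<in>carrier G. generate G {g, h} = carrier G"
    then obtain g h where gh: "g \<in> carrier G" "h \<in> carrier G" "generate G {g, h} = carrier G"
      by blast
    have "min_gen G \<le> card {g, h}" using min_gen_le_card[of "{g, h}"] gh by simp
    also have "\<dots> \<le> 2" by (simp add: card_insert_if)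
    finally have "min_gen G \<le> 2" .
    moreover have "S \<noteq> {}"
      using S(4) generate_empty_eq_carrier_iff assms(2) by (intro notI) simp
    then have "min_gen G \<noteq> 0" using S(2) by (simp flip: S(3))
    ultimately show "min_gen G \<in> {1, 2}" by auto
  next
    assume "min_gen G \<in> {1, 2}"
    then have "card S = 1 \<or> card S = 2" using S(3) by simp
    then obtain g h where "S = {g, h}"
    proof
      assume "card S = 1"
      then obtain g where "S = {g}" by (rule card_1_singletonE)
      then show ?thesis using that[of g g] by simp
    next
      assume "card S = 2"
      then show ?thesis using that by (auto simp: card_2_iff)
    qed
    then show "\<exists>g\<in>carrier G. \<exists>h\<in>carrier G. generate G {g, h} = carrier G" using S by auto
  qed
qed

end

locale odd_order_group = group G for G (structure) +
  assumes odd_order: "odd (order G)"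
begin

lemma finite_carrier: "finite (carrier G)"
  using odd_order card.infinite unfolding order_def by fastforce

abbreviation generates :: "'a set \<Rightarrow> bool" where
  "generates P \<equiv> generate G P = carrier G"

definition completable_by_one :: "'a set \<Rightarrow> bool" where
  "completable_by_one P \<longleftrightarrow> (\<exists>h\<in>carrier G. generates (insert h P))"

definition completable_by_two :: "'a set \<Rightarrow> bool" where
  "completable_by_two P \<longleftrightarrow> (\<exists>g\<in>carrier G. \<exists>h\<in>carrier G. generates (insert g (insert h P)))"

definition nim_formula :: "'a set \<Rightarrow> nat" where
  "nim_formula P =
     (if generates P then 0
      else if odd (card P) then (if completable_by_one P then 1 else 0)
      else if completable_by_two P then 2 else 1)"

lemma generates_mono:
  assumes "generates A" "A \<subseteq> B" "B \<subseteq> carrier G"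
  shows "generates B"
  using assms mono_generate[of A B] generate_incl[of B] by blast

lemma completable_by_one_iff:
  assumes "\<not> generates P"
  shows "completable_by_one P \<longleftrightarrow> (\<exists>h\<in>carrier G - P. generates (insert h P))"
  using assms unfolding completable_by_one_def by (auto simp: insert_absorb)

lemma mex_options_odd_card:
  assumes P: "P \<subseteq> carrier G" "\<not> generates P" "odd (card P)"
    and options: "\<And>g. g \<in> carrier G - P \<Longrightarrow> gen_nim G (insert g P) =
       (if generates (insert g P) then 0 else if completable_by_two (insert g P) then 2 else 1)"
  shows "mex {gen_nim G (insert g P) | g. g \<in> carrier G - P} = (if completable_by_one P then 1 else 0)"
    (is "mex ?S = _")
proof (cases "completable_by_one P")
  case True
  then obtain h where h: "h \<in> carrier G - P" "generates (insert h P)"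
    unfolding completable_by_one_iff[OF P(2)] by blast
  have "gen_nim G (insert h P) \<in> ?S" using h(1) by blast
  then have "0 \<in> ?S" using options[OF h(1)] h(2) by simp
  moreover have "1 \<notin> ?S"
  proof
    assume "1 \<in> ?S"
    then obtain g where g: "g \<in> carrier G - P" "gen_nim G (insert g P) = 1" by auto
    have "insert h P \<subseteq> insert h (insert g P)" by blast
    moreover have "insert h (insert g P) \<subseteq> carrier G" using g(1) h(1) P(1) by blast
    ultimately have "generates (insert h (insert h (insert g P)))"
      by (simp add: generates_mono[OF h(2)])
    then have "completable_by_two (insert g P)"
      using h(1) unfolding completable_by_two_def by blast
    then show False using options[OF g(1)] g(2) by (simp split: if_splits)
  qed
  ultimately have "mex ?S = 1" by (intro mex_eqI) auto
  then show ?thesis using True by simp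
next
  case False
  have "0 \<notin> ?S"
  proof
    assume "0 \<in> ?S"
    then obtain g where g: "g \<in> carrier G - P" "gen_nim G (insert g P) = 0" by auto
    then have "generates (insert g P)" using options[OF g(1)] by (simp split: if_splits)
    then have "completable_by_one P" unfolding completable_by_one_iff[OF P(2)] using g(1) by blast
    with False show False by contradiction
  qed
  then have "mex ?S = 0" by (intro mex_eqI) auto
  then show ?thesis using False by simp
qed

lemma even_card_harmless_move:
  assumes "P \<subseteq> carrier G" "even (card P)"
  obtains g where "g \<in> carrier G - P"
    "\<And>Q. P \<subseteq> Q \<Longrightarrow> Q \<subseteq> carrier G \<Longrightarrow> generate G (insert g Q) = generate G Q"
proof -
  obtain g where g: "g \<in> generate G P - P"
    using even_card_generates_new[OF odd_order assms] .
  have "generate G (insert g Q) = generate G Q" if "P \<subseteq> Q" "Q \<subseteq> carrier G" for Q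
    using generate_insert_absorb[OF that(2)] g mono_generate[OF that(1)] by blast
  moreover have "g \<in> carrier G" using g generate_incl[OF assms(1)] by blast
  ultimately show ?thesis using that g by blast
qed

lemma even_card_has_losing_option:
  assumes "P \<subseteq> carrier G" "\<not> generates P" "even (card P)"
  shows "\<exists>g\<in>carrier G - P. generates (insert g P) \<or> \<not> completable_by_one (insert g P)"
proof (cases "completable_by_one P")
  case True
  then show ?thesis using completable_by_one_iff[OF assms(2)] by blast
next
  case False
  obtain g where g: "g \<in> carrier G - P"
    "\<And>Q. P \<subseteq> Q \<Longrightarrow> Q \<subseteq> carrier G \<Longrightarrow> generate G (insert g Q) = generate G Q"
    using even_card_harmless_move[OF assms(1,3)] by blast
  have "generate G (insert h (insert g P)) = generate G (insert h P)" if "h \<in> carrier G" for h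
    using g(2)[of "insert h P"] that assms(1) by (auto simp: insert_commute)
  then have "\<not> completable_by_one (insert g P)"
    using False unfolding completable_by_one_def by simp
  then show ?thesis using g(1) by blast
qed

lemma even_card_completable_by_two_iff:
  assumes "P \<subseteq> carrier G" "\<not> generates P" "even (card P)"
  shows "completable_by_two P \<longleftrightarrow>
    (\<exists>g\<in>carrier G - P. \<not> generates (insert g P) \<and> completable_by_one (insert g P))"
proof
  assume two: "completable_by_two P"
  show "\<exists>g\<in>carrier G - P. \<not> generates (insert g P) \<and> completable_by_one (insert g P)"
  proof (cases "completable_by_one P")
    case True
    then obtain k where k: "k \<in> carrier G" "generates (insert k P)"
      unfolding completable_by_one_def by blast
    obtain g where g: "g \<in> carrier G - P"
      "\<And>Q. P \<subseteq> Q \<Longrightarrow> Q \<subseteq> carrier G \<Longrightarrow> generate G (insert g Q) = generate G Q"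
      using even_card_harmless_move[OF assms(1,3)] by blast
    have "insert k P \<subseteq> insert k (insert g P)" by blast
    moreover have "insert k (insert g P) \<subseteq> carrier G" using g(1) k(1) assms(1) by blast
    ultimately have "generates (insert k (insert g P))" by (rule generates_mono[OF k(2)])
    then have "completable_by_one (insert g P)" using k(1) unfolding completable_by_one_def by blast
    moreover have "\<not> generates (insert g P)" using g(2)[of P] assms(1,2) by simp
    ultimately show ?thesis using g(1) by blast
  next
    case False
    then obtain g h where gh: "g \<in> carrier G" "h \<in> carrier G" "generates (insert g (insert h P))"
      using two unfolding completable_by_two_def by blast
    have "h \<notin> P"
    proof
      assume "h \<in> P"
      then have "generates (insert g P)" using gh(3) by (simp add: insert_absorb)
      then show False using False gh(1) unfolding completable_by_one_def by blast
    qed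
    moreover have "\<not> generates (insert h P)"
      using False gh(2) unfolding completable_by_one_def by blast
    ultimately show ?thesis using gh unfolding completable_by_one_def by blast
  qed
next
  assume "\<exists>g\<in>carrier G - P. \<not> generates (insert g P) \<and> completable_by_one (insert g P)"
  then show "completable_by_two P"
    unfolding completable_by_one_def completable_by_two_def by blast
qed

lemma mex_options_even_card:
  assumes P: "P \<subseteq> carrier G" "\<not> generates P" "even (card P)"
    and options: "\<And>g. g \<in> carrier G - P \<Longrightarrow> gen_nim G (insert g P) =
       (if generates (insert g P) then 0 else if completable_by_one (insert g P) then 1 else 0)"
  shows "mex {gen_nim G (insert g P) | g. g \<in> carrier G - P} = (if completable_by_two P then 2 else 1)"
    (is "mex ?S = _")
proof -
  have option_in: "gen_nim G (insert g P) \<in> ?S" if "g \<in> carrier G - P" for g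
    using that by blast
  obtain g where g: "g \<in> carrier G - P" "generates (insert g P) \<or> \<not> completable_by_one (insert g P)"
    using even_card_has_losing_option[OF P] by blast
  have "gen_nim G (insert g P) = 0" using options[OF g(1)] g(2) by auto
  then have "0 \<in> ?S" using option_in[OF g(1)] by simp
  have "1 \<in> ?S \<longleftrightarrow>
    (\<exists>g\<in>carrier G - P. \<not> generates (insert g P) \<and> completable_by_one (insert g P))"
  proof
    assume "1 \<in> ?S"
    then obtain g where g: "g \<in> carrier G - P" "gen_nim G (insert g P) = 1" by auto
    have nongenerating: "\<not> generates (insert g P)"
    proof
      assume "generates (insert g P)"
      then show False using options[OF g(1)] g(2) by simp
    qed
    moreover have "completable_by_one (insert g P)"
    proof (rule ccontr)
      assume "\<not> completable_by_one (insert g P)"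
      then show False using options[OF g(1)] g(2) nongenerating by simp
    qed
    ultimately show "\<exists>g\<in>carrier G - P. \<not> generates (insert g P) \<and> completable_by_one (insert g P)"
      using g(1) by blast
  next
    assume "\<exists>g\<in>carrier G - P. \<not> generates (insert g P) \<and> completable_by_one (insert g P)"
    then obtain g where g: "g \<in> carrier G - P" "\<not> generates (insert g P)"
      "completable_by_one (insert g P)" by blast
    then have "gen_nim G (insert g P) = 1" using options[OF g(1)] by simp
    then show "1 \<in> ?S" using option_in[OF g(1)] by simp
  qed
  then have one: "1 \<in> ?S \<longleftrightarrow> completable_by_two P"
    using even_card_completable_by_two_iff[OF P] by simp
  have "2 \<notin> ?S"
  proof
    assume "2 \<in> ?S"
    then obtain g where "g \<in> carrier G - P" "gen_nim G (insert g P) = 2" by auto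
    then show False using options[of g] by (simp split: if_splits)
  qed
  show ?thesis
  proof (cases "completable_by_two P")
    case True
    have "mex ?S = 2"
      by (rule mex_eqI) (use \<open>0 \<in> ?S\<close> \<open>2 \<notin> ?S\<close> one True in \<open>auto simp: less_2_cases_iff\<close>)
    then show ?thesis using True by simp
  next
    case False
    have "mex ?S = 1"
      by (rule mex_eqI) (use \<open>0 \<in> ?S\<close> one False in auto)
    then show ?thesis using False by simp
  qed
qed

lemma mex_options_eq_nim_formula:
  assumes P: "P \<subseteq> carrier G" "\<not> generates P"
    and options: "\<And>g. g \<in> carrier G - P \<Longrightarrow> gen_nim G (insert g P) = nim_formula (insert g P)"
  shows "mex {gen_nim G (insert g P) | g. g \<in> carrier G - P} = nim_formula P"
proof -
  have "finite P" using P(1) finite_carrier finite_subset by blast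
  then have card_option: "card (insert g P) = Suc (card P)" if "g \<in> carrier G - P" for g
    using that by simp
  have option_value: "gen_nim G (insert g P) =
      (if generates (insert g P) then 0
       else if even (card P) then (if completable_by_one (insert g P) then 1 else 0)
       else if completable_by_two (insert g P) then 2 else 1)" if "g \<in> carrier G - P" for g
    unfolding options[OF that] nim_formula_def card_option[OF that] by simp
  show ?thesis
  proof (cases "odd (card P)")
    case True
    have "mex {gen_nim G (insert g P) | g. g \<in> carrier G - P} = (if completable_by_one P then 1 else 0)"
    proof (rule mex_options_odd_card[OF P True])
      fix g assume "g \<in> carrier G - P"
      then show "gen_nim G (insert g P) = (if generates (insert g P) then 0
          else if completable_by_two (insert g P) then 2 else 1)"
        using option_value[of g] True by simp
    qed
    then show ?thesis using P(2) True by (simp add: nim_formula_def)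
  next
    case False
    have "mex {gen_nim G (insert g P) | g. g \<in> carrier G - P} = (if completable_by_two P then 2 else 1)"
    proof (rule mex_options_even_card[OF P])
      show "even (card P)" using False by simp
      fix g assume "g \<in> carrier G - P"
      then show "gen_nim G (insert g P) = (if generates (insert g P) then 0
          else if completable_by_one (insert g P) then 1 else 0)"
        using option_value[of g] False by simp
    qed
    then show ?thesis using P(2) False by (simp add: nim_formula_def)
  qed
qed

lemma gen_nim_eq_nim_formula:
  assumes "P \<subseteq> carrier G"
  shows "gen_nim G P = nim_formula P"
  using assms
proof (induction "card (carrier G - P)" arbitrary: P rule: less_induct)
  case less
  have IH: "gen_nim G (insert g P) = nim_formula (insert g P)" if g: "g \<in> carrier G - P" for g
  proof (rule less.hyps)
    show "card (carrier G - insert g P) < card (carrier G - P)"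
      using g finite_carrier by (intro psubset_card_mono) auto
  qed (use g less.prems in blast)
  show ?case
  proof (cases "generates P")
    case True
    then show ?thesis by (simp add: gen_nim_unfold[OF finite_carrier, of P] nim_formula_def)
  next
    case False
    then show ?thesis
      using mex_options_eq_nim_formula[OF less.prems False IH]
      by (simp add: gen_nim_unfold[OF finite_carrier, of P])
  qed
qed

end

theorem proposition4p1:
  fixes H :: "('a, 'b) monoid_scheme"
  assumes "group H" and "finite (carrier H)" and "odd (order H)"
  shows "GEN H = (if order H = 1 then 0
                  else if min_gen H \<in> {1, 2} then 2
                  else 1)"
proof -
  interpret odd_order_group H
    using assms(1,3) by (simp add: odd_order_group_def odd_order_group_axioms_def)
  have "GEN H = nim_formula {}"
    unfolding GEN_def by (simp add: gen_nim_eq_nim_formula)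
  then show ?thesis
    unfolding nim_formula_def completable_by_two_def
    using generate_empty_eq_carrier_iff generated_by_two_iff_min_gen[OF finite_carrier]
    by auto
qed

end
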